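(* Let $\mathcal{D}$ be an $S(2,k,v)$ that has a near parallel class. Then $G_1=1$-$\mathrm{BIG}(\mathcal{D})$ is not silver.
   Context: A Steiner $2$-design $S(2,k,v)$ ($2<k<v$) is a pair $(V,\mathcal{B})$ with $|V|=v$ and $\mathcal{B}$ a collection of $k$-subsets of $V$ (blocks) such that every $2$-subset of $V$ lies in exactly one block. A partial parallel class is a set of pairwise disjoint blocks; a near parallel class is a partial parallel class whose union is $V$ minus a single element. The $1$-block intersection graph $1$-$\mathrm{BIG}(\mathcal{D})$ has the blocks as vertices, two blocks adjacent iff they intersect in exactly one element (it is $k(v-k)/(k-1)$-regular). An $\alpha$-set of a graph is a maximum independent set. Let $G$ be an $r$-regular graph and $c$ a proper $(r+1)$-coloring of $G$. A vertex $x$ is rainbow with respect to $c$ if every one of the $r+1$ colors appears on $N[x]=N(x)\cup\{x\}$. Given an $\alpha$-set $I$, $c$ is silver with respect to $I$ if every $x\in I$ is rainbow; $G$ is silver if it admits a silver coloring with respect to some $\alpha$-set. *)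

theory Defs
  imports Main
begin

definition steiner_2_design :: "nat \<Rightarrow> nat \<Rightarrow> 'a set \<Rightarrow> 'a set set \<Rightarrow> bool" where
  "steiner_2_design k v V B \<longleftrightarrow>
     finite V \<and> card V = v \<and> 2 < k \<and> k < v \<and>
     (\<forall>b\<in>B. b \<subseteq> V \<and> card b = k) \<and>
     (\<forall>x\<in>V. \<forall>y\<in>V. x \<noteq> y \<longrightarrow> (\<exists>!b. b \<in> B \<and> {x, y} \<subseteq> b))"

definition partial_parallel_class :: "'a set set \<Rightarrow> 'a set set \<Rightarrow> bool" where
  "partial_parallel_class B P \<longleftrightarrow>
     P \<subseteq> B \<and> (\<forall>b1\<in>P. \<forall>b2\<in>P. b1 \<noteq> b2 \<longrightarrow> b1 \<inter> b2 = {})"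

definition near_parallel_class :: "'a set \<Rightarrow> 'a set set \<Rightarrow> 'a set set \<Rightarrow> bool" where
  "near_parallel_class V B P \<longleftrightarrow>
     partial_parallel_class B P \<and> (\<exists>x\<in>V. \<Union>P = V - {x})"

definition nbhd :: "'v set \<Rightarrow> ('v \<Rightarrow> 'v \<Rightarrow> bool) \<Rightarrow> 'v \<Rightarrow> 'v set" where
  "nbhd Vs E x = {y\<in>Vs. E x y}"

definition closed_nbhd :: "'v set \<Rightarrow> ('v \<Rightarrow> 'v \<Rightarrow> bool) \<Rightarrow> 'v \<Rightarrow> 'v set" where
  "closed_nbhd Vs E x = insert x (nbhd Vs E x)"

definition regular_graph :: "'v set \<Rightarrow> ('v \<Rightarrow> 'v \<Rightarrow> bool) \<Rightarrow> nat \<Rightarrow> bool" where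
  "regular_graph Vs E r \<longleftrightarrow> (\<forall>x\<in>Vs. finite (nbhd Vs E x) \<and> card (nbhd Vs E x) = r)"

definition independent_set :: "'v set \<Rightarrow> ('v \<Rightarrow> 'v \<Rightarrow> bool) \<Rightarrow> 'v set \<Rightarrow> bool" where
  "independent_set Vs E I \<longleftrightarrow> I \<subseteq> Vs \<and> (\<forall>x\<in>I. \<forall>y\<in>I. \<not> E x y)"

definition alpha_set :: "'v set \<Rightarrow> ('v \<Rightarrow> 'v \<Rightarrow> bool) \<Rightarrow> 'v set \<Rightarrow> bool" where
  "alpha_set Vs E I \<longleftrightarrow> independent_set Vs E I \<and> finite I \<and>
     (\<forall>J. independent_set Vs E J \<longrightarrow> finite J \<and> card J \<le> card I)"

definition proper_coloring :: "'v set \<Rightarrow> ('v \<Rightarrow> 'v \<Rightarrow> bool) \<Rightarrow> nat \<Rightarrow> ('v \<Rightarrow> nat) \<Rightarrow> bool" where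
  "proper_coloring Vs E m c \<longleftrightarrow>
     (\<forall>x\<in>Vs. c x < m) \<and> (\<forall>x\<in>Vs. \<forall>y\<in>Vs. E x y \<longrightarrow> c x \<noteq> c y)"

definition rainbow :: "'v set \<Rightarrow> ('v \<Rightarrow> 'v \<Rightarrow> bool) \<Rightarrow> nat \<Rightarrow> ('v \<Rightarrow> nat) \<Rightarrow> 'v \<Rightarrow> bool" where
  "rainbow Vs E m c x \<longleftrightarrow> c ` closed_nbhd Vs E x = {..<m}"

definition silver_coloring :: "'v set \<Rightarrow> ('v \<Rightarrow> 'v \<Rightarrow> bool) \<Rightarrow> nat \<Rightarrow> ('v \<Rightarrow> nat) \<Rightarrow> 'v set \<Rightarrow> bool" where
  "silver_coloring Vs E r c I \<longleftrightarrow>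
     alpha_set Vs E I \<and> proper_coloring Vs E (r + 1) c \<and> (\<forall>x\<in>I. rainbow Vs E (r + 1) c x)"

definition silver :: "'v set \<Rightarrow> ('v \<Rightarrow> 'v \<Rightarrow> bool) \<Rightarrow> bool" where
  "silver Vs E \<longleftrightarrow> (\<exists>r. regular_graph Vs E r \<and> (\<exists>c I. silver_coloring Vs E r c I))"

definition one_BIG_adj :: "'a set \<Rightarrow> 'a set \<Rightarrow> bool" where
  "one_BIG_adj b1 b2 \<longleftrightarrow> b1 \<noteq> b2 \<and> card (b1 \<inter> b2) = 1"

end

theory Submission
  imports Defs
begin

(*
  Blocks are adjacent in the 1-BIG iff they are distinct and meet, so independent sets are
  partial parallel classes; with a near parallel class present, every alpha-set I is a near
  parallel class, with m = (v-1)/k blocks, missing one point p that lies on n = (v-1)/(k-1) > m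
  blocks (the pencil of p).  Suppose c is a proper (r+1)-colouring for which every block of I
  is rainbow.  Double counting shows that every colour class C satisfies
  sum of weight y over C = m, where weight y = |N[y] \<inter> I| is 1 on I, k - 1 on the pencil and
  k elsewhere.  Colour classes are independent, so they contain at most one pencil block.
  If m mod k \<noteq> k - 1, every pencil colour also occurs on I, giving n \<le> m.  Otherwise every
  colour missing from the pencil occurs at least k - 1 times on I; at least n - 1 colours miss
  the pencil, since a closed neighbourhood contains the 2n - 1 blocks through two points of a
  block, so (n - 1)(k - 1) \<le> m, which is impossible.
*)

lemma closed_nbhd_card:
  assumes "regular_graph Vs E r" "x \<in> Vs" "\<not> E x x"
  shows "finite (closed_nbhd Vs E x)" "card (closed_nbhd Vs E x) = r + 1"
  using assms unfolding regular_graph_def closed_nbhd_def nbhd_def by auto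

text \<open>A vertex that is rainbow for r + 1 colours sees every colour exactly once in its closed
  neighbourhood, because that neighbourhood has only r + 1 vertices.\<close>
lemma rainbow_inj_on:
  assumes "regular_graph Vs E r" "x \<in> Vs" "\<not> E x x" "rainbow Vs E (r + 1) c x"
  shows "inj_on c (closed_nbhd Vs E x)"
  using assms(4) closed_nbhd_card[OF assms(1-3)]
  by (intro eq_card_imp_inj_on) (auto simp: rainbow_def)

lemma rainbow_colour_once:
  assumes "regular_graph Vs E r" "x \<in> Vs" "\<not> E x x" "rainbow Vs E (r + 1) c x" "i < r + 1"
  shows "card {y \<in> closed_nbhd Vs E x. c y = i} = 1"
proof -
  obtain y where "y \<in> closed_nbhd Vs E x" "c y = i"
    using assms(4,5) unfolding rainbow_def by (metis imageE lessThan_iff)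
  with rainbow_inj_on[OF assms(1-4)] have "{y \<in> closed_nbhd Vs E x. c y = i} = {y}"
    unfolding inj_on_def by blast
  then show ?thesis by simp
qed

text \<open>Double counting the pairs (x, y) with x in I, y of colour i and y in N[x]: if every x in I
  sees colour i exactly once, the colour class of i meets the neighbourhoods of I in card I pairs.\<close>
lemma colour_class_double_count:
  assumes "finite Vs" "\<And>x y. E x y \<longleftrightarrow> E y x" "I \<subseteq> Vs"
    and once: "\<And>x. x \<in> I \<Longrightarrow> card {y \<in> closed_nbhd Vs E x. c y = i} = 1"
  shows "(\<Sum>y \<in> {y \<in> Vs. c y = i}. card (closed_nbhd Vs E y \<inter> I)) = card I"
proof -
  let ?C = "{y \<in> Vs. c y = i}" and ?N = "closed_nbhd Vs E"
  have fI: "finite I" using assms(1,3) finite_subset by blast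
  have mem_sym: "x \<in> ?N y \<longleftrightarrow> y \<in> ?N x" if "x \<in> Vs" "y \<in> Vs" for x y
    using that assms(2) unfolding closed_nbhd_def nbhd_def by auto
  have "(\<Sum>y \<in> ?C. card (?N y \<inter> I)) = (\<Sum>y \<in> ?C. \<Sum>x \<in> I. of_bool (x \<in> ?N y))"
    using fI by (simp add: Int_commute Int_def)
  also have "\<dots> = (\<Sum>x \<in> I. \<Sum>y \<in> ?C. of_bool (x \<in> ?N y))"
    by (rule sum.swap)
  also have "\<dots> = (\<Sum>x \<in> I. card {y \<in> ?N x. c y = i})"
  proof (rule sum.cong)
    fix x assume "x \<in> I"
    then have "?C \<inter> {y. x \<in> ?N y} = {y \<in> ?N x. c y = i}"
      using assms(3) mem_sym unfolding closed_nbhd_def nbhd_def by auto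
    then show "(\<Sum>y \<in> ?C. of_bool (x \<in> ?N y)) = card {y \<in> ?N x. c y = i}"
      using assms(1) by simp
  qed simp
  also have "\<dots> = card I" using once by simp
  finally show ?thesis .
qed

text \<open>A partial parallel class at least as large as a near parallel class is itself near parallel.\<close>
lemma parallel_class_size_forced:
  fixes cP cI k v :: nat
  assumes "cP * k = v - 1" "cP \<le> cI" "cI * k \<le> v" "1 < k"
  shows "cI * k = v - 1"
proof (rule ccontr)
  assume "cI * k \<noteq> v - 1"
  then have "Suc cP \<le> cI" using assms(1,2) le_antisym not_less_eq_eq by fastforce
  then have "Suc cP * k \<le> cI * k" by (rule mult_le_mono1)
  then show False using assms by simp
qed

text \<open>Arithmetic facts about the parameters: m = (v - 1) / k is the size of a near parallel class
  and n = (v - 1) / (k - 1) the number of blocks through a point.\<close>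
lemma near_parallel_class_size_ge_2:
  fixes m n k v :: nat
  assumes "m * k = v - 1" "n * (k - 1) = v - 1" "k < v" "2 < k"
  shows "2 \<le> m"
proof (rule ccontr)
  assume "\<not> 2 \<le> m"
  then consider "m = 0" | "m = 1" by linarith
  then show False
  proof cases
    case 1
    then show False using assms by simp
  next
    case 2
    then have e: "n * (k - 1) = k" using assms by simp
    show False
    proof (cases "n \<le> 1")
      case True
      then show False using e assms by (cases n) auto
    next
      case False
      then have "2 * (k - 1) \<le> n * (k - 1)" by (intro mult_le_mono1) simp
      then show False using e assms by linarith
    qed
  qed
qed

lemma pencil_exceeds_class:
  fixes m n k :: nat
  assumes "n * (k - 1) = m * k" "0 < m" "2 < k"
  shows "m < n"
proof (rule ccontr)
  assume "\<not> m < n"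
  then have "n * (k - 1) \<le> m * (k - 1)" by (intro mult_le_mono1) simp
  moreover have "m * (k - 1) < m * k" using assms by simp
  ultimately show False using assms by linarith
qed

text \<open>The final count of the proof cannot hold: (n - 1)(k - 1) = m(k - 1) + m - k + 1 > m.\<close>
lemma colour_count_impossible:
  fixes m n k :: nat
  assumes "n * (k - 1) = m * k" "(n - 1) * (k - 1) \<le> m" "2 \<le> m" "2 < k"
  shows False
proof -
  obtain K where K: "k = Suc K" using assms by (cases k) auto
  have e: "n * K = m * K + m" using assms(1) K by simp
  have "(n - 1) * K = n * K - K" by (simp add: diff_mult_distrib)
  then have "m * K + m - K \<le> m" using assms(2) e K by simp
  moreover have "2 * K \<le> m * K" using assms(3) mult_le_mono1 by blast
  ultimately show False using K assms by linarith
qed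

lemma not_adj_self: "\<not> one_BIG_adj x x"
  unfolding one_BIG_adj_def by simp

lemma adj_sym: "one_BIG_adj x y \<longleftrightarrow> one_BIG_adj y x"
  unfolding one_BIG_adj_def by (auto simp: Int_commute)

locale steiner_design =
  fixes k v :: nat and V :: "'a set" and B :: "'a set set"
  assumes design: "steiner_2_design k v V B"
begin

lemma finite_V: "finite V" and card_V: "card V = v" and k_gt_2: "2 < k" and k_lt_v: "k < v"
  and block_subset: "b \<in> B \<Longrightarrow> b \<subseteq> V" and card_block: "b \<in> B \<Longrightarrow> card b = k"
  using design unfolding steiner_2_design_def by auto

lemma finite_B: "finite B"
  using block_subset finite_V by (meson Pow_iff finite_Pow_iff finite_subset subsetI)

lemma finite_block: "b \<in> B \<Longrightarrow> finite b"
  using block_subset finite_V finite_subset by blast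

lemma unique_block: "x \<in> V \<Longrightarrow> y \<in> V \<Longrightarrow> x \<noteq> y \<Longrightarrow> \<exists>!b. b \<in> B \<and> {x, y} \<subseteq> b"
  using design unfolding steiner_2_design_def by simp

lemma pair_in_block:
  assumes "x \<in> V" "y \<in> V" "x \<noteq> y"
  shows "\<exists>b\<in>B. x \<in> b \<and> y \<in> b"
  using ex1_implies_ex[OF unique_block[OF assms]] by auto

lemma block_unique:
  assumes "b1 \<in> B" "b2 \<in> B" "x \<in> b1" "y \<in> b1" "x \<in> b2" "y \<in> b2" "x \<noteq> y"
  shows "b1 = b2"
proof -
  have "x \<in> V" "y \<in> V" using assms block_subset by blast+
  then have "\<exists>!b. b \<in> B \<and> {x, y} \<subseteq> b" using unique_block assms(7) by blast
  then show ?thesis using assms by blast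
qed

text \<open>Two distinct blocks share at most one point, so in the 1-block intersection graph
  two blocks are adjacent exactly when they are distinct and not disjoint.\<close>
lemma card_Int_le_1:
  assumes "b1 \<in> B" "b2 \<in> B" "b1 \<noteq> b2"
  shows "card (b1 \<inter> b2) \<le> 1"
proof -
  have "x = y" if "x \<in> b1 \<inter> b2" "y \<in> b1 \<inter> b2" for x y
    using that block_unique[OF assms(1,2), of x y] assms(3) by blast
  then show ?thesis using finite_block[OF assms(1)] by (simp add: card_le_Suc0_iff_eq)
qed

lemma adj_iff:
  assumes "b1 \<in> B" "b2 \<in> B"
  shows "one_BIG_adj b1 b2 \<longleftrightarrow> b1 \<noteq> b2 \<and> b1 \<inter> b2 \<noteq> {}"
proof -
  have "finite (b1 \<inter> b2)" using finite_block[OF assms(1)] by simp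
  then show ?thesis
    using card_Int_le_1[OF assms] unfolding one_BIG_adj_def
    by (metis card_0_eq le_antisym less_one not_le)
qed

text \<open>Every point lies on exactly (v - 1) / (k - 1) blocks: the blocks through q partition V - {q}.\<close>
lemma replication_number:
  assumes "q \<in> V"
  shows "card {b \<in> B. q \<in> b} * (k - 1) = v - 1"
proof -
  let ?Bq = "{b \<in> B. q \<in> b}"
  have "v - 1 = card (V - {q})" using finite_V card_V assms by simp
  also have "V - {q} = (\<Union>b \<in> ?Bq. b - {q})"
    using pair_in_block[OF assms] block_subset by blast
  also have "card (\<Union>b \<in> ?Bq. b - {q}) = (\<Sum>b \<in> ?Bq. card (b - {q}))"
  proof (rule card_UN_disjoint)
    show "\<forall>b1 \<in> ?Bq. \<forall>b2 \<in> ?Bq. b1 \<noteq> b2 \<longrightarrow> (b1 - {q}) \<inter> (b2 - {q}) = {}"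
      using block_unique[of _ _ q] by blast
  qed (use finite_B finite_block in auto)
  also have "\<dots> = card ?Bq * (k - 1)"
    using card_block finite_block by (simp add: card_Diff_singleton)
  finally show ?thesis by simp
qed

lemma independent_iff_disjoint:
  "independent_set B one_BIG_adj Q \<longleftrightarrow> Q \<subseteq> B \<and> pairwise disjnt Q"
proof -
  have "\<not> one_BIG_adj x y \<longleftrightarrow> (x \<noteq> y \<longrightarrow> disjnt x y)" if "x \<in> B" "y \<in> B" for x y
    using adj_iff[OF that] unfolding disjnt_def by auto
  then show ?thesis unfolding independent_set_def pairwise_def by (metis subsetD)
qed

lemma card_Union_disjoint_blocks:
  assumes "Q \<subseteq> B" "pairwise disjnt Q"
  shows "card (\<Union>Q) = card Q * k"
proof -
  have "card (\<Union>Q) = sum card Q"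
    using assms finite_block by (intro card_Union_disjoint) auto
  also have "\<dots> = (\<Sum>b \<in> Q. k)" using assms card_block by (intro sum.cong) auto
  also have "\<dots> = card Q * k" by simp
  finally show ?thesis .
qed

text \<open>If the design has a near parallel class, every alpha-set of its 1-BIG is itself a near
  parallel class: its blocks are pairwise disjoint, so it covers card I * k \<le> v points, while
  maximality gives card I \<ge> (v - 1) / k.\<close>
lemma alpha_set_near_parallel:
  assumes "near_parallel_class V B P" "alpha_set B one_BIG_adj I"
  shows "\<exists>p \<in> V. \<Union>I = V - {p}"
proof -
  have P: "P \<subseteq> B" "pairwise disjnt P" and I: "I \<subseteq> B" "pairwise disjnt I"
    using assms independent_iff_disjoint
    unfolding near_parallel_class_def partial_parallel_class_def alpha_set_def pairwise_def disjnt_def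
    by auto
  obtain x where "x \<in> V" "\<Union>P = V - {x}"
    using assms(1) unfolding near_parallel_class_def by blast
  then have cP: "card P * k = v - 1"
    using card_Union_disjoint_blocks[OF P] finite_V card_V by simp
  have cPI: "card P \<le> card I"
    using assms(2) P independent_iff_disjoint unfolding alpha_set_def by blast
  have UI: "\<Union>I \<subseteq> V" using I block_subset by blast
  then have cIk: "card I * k \<le> v"
    using card_Union_disjoint_blocks[OF I] card_mono[OF finite_V] card_V by metis
  have "card I * k = v - 1"
    using parallel_class_size_forced[OF cP cPI cIk] k_gt_2 by simp
  then have "card (V - \<Union>I) = 1"
    using card_Diff_subset[OF finite_subset[OF UI finite_V] UI] card_Union_disjoint_blocks[OF I]
      card_V k_lt_v by simp
  then obtain p where "V - \<Union>I = {p}" by (rule card_1_singletonE)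
  then show ?thesis using UI by blast
qed

end

locale rainbow_near_parallel_class = steiner_design +
  fixes r :: nat and c :: "'a set \<Rightarrow> nat" and I :: "'a set set" and p :: 'a
  assumes regular: "regular_graph B one_BIG_adj r"
    and proper: "proper_coloring B one_BIG_adj (r + 1) c"
    and rainbow_I: "\<And>x. x \<in> I \<Longrightarrow> rainbow B one_BIG_adj (r + 1) c x"
    and I_blocks: "I \<subseteq> B"
    and I_disjoint: "pairwise disjnt I"
    and p_in_V: "p \<in> V"
    and I_covers: "\<Union>I = V - {p}"
begin

text \<open>The blocks through p, the colour classes, and the number of blocks of I in the closed
  neighbourhood of a block (computed in nbhd_I_card).\<close>
definition pencil :: "'a set set" where
  "pencil = {b \<in> B. p \<in> b}"

definition colour_class :: "nat \<Rightarrow> 'a set set" where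
  "colour_class i = {y \<in> B. c y = i}"

definition weight :: "'a set \<Rightarrow> nat" where
  "weight y = (if y \<in> I then 1 else if p \<in> y then k - 1 else k)"

abbreviation N :: "'a set \<Rightarrow> 'a set set" where
  "N \<equiv> closed_nbhd B one_BIG_adj"

lemma finite_I: "finite I"
  using I_blocks finite_B finite_subset by blast

lemma card_I: "card I * k = v - 1"
  using card_Union_disjoint_blocks[OF I_blocks I_disjoint] I_covers p_in_V finite_V card_V by simp

lemma finite_pencil: "finite pencil"
  using finite_B unfolding pencil_def by simp

lemma card_pencil: "card pencil * (k - 1) = v - 1"
  unfolding pencil_def by (rule replication_number[OF p_in_V])

lemma card_I_ge_2: "2 \<le> card I"
  using near_parallel_class_size_ge_2[OF card_I card_pencil k_lt_v k_gt_2] .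

lemma card_I_less_pencil: "card I < card pencil"
  using pencil_exceeds_class[of "card pencil" k "card I"] card_I card_pencil card_I_ge_2 k_gt_2
  by simp

lemma colour_bound: "y \<in> B \<Longrightarrow> c y < r + 1"
  using proper unfolding proper_coloring_def by blast

lemma adj_colours_differ: "y \<in> B \<Longrightarrow> z \<in> B \<Longrightarrow> one_BIG_adj y z \<Longrightarrow> c y \<noteq> c z"
  using proper unfolding proper_coloring_def by blast

text \<open>Blocks through p pairwise intersect, hence are adjacent and receive distinct colours.\<close>
lemma pencil_inj: "inj_on c pencil"
  using adj_colours_differ adj_iff unfolding pencil_def inj_on_def by blast

text \<open>A block of I meets only itself among I; any other block y meets the blocks of I in the
  points of y - {p}, one block per point, since I partitions V - {p}.\<close>
lemma nbhd_I_card: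
  assumes "y \<in> B"
  shows "card (N y \<inter> I) = weight y"
proof (cases "y \<in> I")
  case True
  have "\<not> one_BIG_adj y x" if "x \<in> I" "x \<noteq> y" for x
  proof -
    have "y \<inter> x = {}" using I_disjoint True that unfolding pairwise_def disjnt_def by blast
    then show ?thesis using adj_iff[OF assms] I_blocks that by blast
  qed
  then have "N y \<inter> I = {y}" using True unfolding closed_nbhd_def nbhd_def by auto
  then show ?thesis using True unfolding weight_def by simp
next
  case False
  let ?J = "{x \<in> I. x \<inter> y \<noteq> {}}"
  have J: "N y \<inter> I = ?J"
    using False I_blocks adj_iff[OF assms] adj_sym unfolding closed_nbhd_def nbhd_def by auto
  have cover: "y - {p} = (\<Union>x \<in> ?J. x \<inter> y)"
  proof
    show "y - {p} \<subseteq> (\<Union>x \<in> ?J. x \<inter> y)"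
    proof
      fix q assume "q \<in> y - {p}"
      moreover then have "q \<in> \<Union>I" using I_covers block_subset[OF assms] by blast
      ultimately show "q \<in> (\<Union>x \<in> ?J. x \<inter> y)" by blast
    qed
    show "(\<Union>x \<in> ?J. x \<inter> y) \<subseteq> y - {p}" using I_covers by blast
  qed
  have "card (y - {p}) = (\<Sum>x \<in> ?J. card (x \<inter> y))"
    unfolding cover
  proof (rule card_UN_disjoint)
    show "\<forall>x1 \<in> ?J. \<forall>x2 \<in> ?J. x1 \<noteq> x2 \<longrightarrow> (x1 \<inter> y) \<inter> (x2 \<inter> y) = {}"
      using I_disjoint unfolding pairwise_def disjnt_def by blast
  qed (use finite_I finite_block[OF assms] in auto)
  also have "\<dots> = card ?J"
  proof -
    have "card (x \<inter> y) = 1" if "x \<in> ?J" for x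
      using that False I_blocks adj_iff[OF _ assms, of x] unfolding one_BIG_adj_def by auto
    then show ?thesis by simp
  qed
  finally have "card ?J = card (y - {p})" ..
  also have "\<dots> = (if p \<in> y then k - 1 else k)"
    using card_block[OF assms] finite_block[OF assms] by (simp add: card_Diff_singleton_if)
  finally show ?thesis using J False unfolding weight_def by simp
qed

text \<open>Every colour class has total weight card I, by double counting and rainbowness of I.\<close>
lemma colour_class_weight:
  assumes "i < r + 1"
  shows "(\<Sum>y \<in> colour_class i. weight y) = card I"
proof -
  have "(\<Sum>y \<in> colour_class i. weight y) = (\<Sum>y \<in> colour_class i. card (N y \<inter> I))"
    using nbhd_I_card unfolding colour_class_def by simp
  also have "\<dots> = card I"
    unfolding colour_class_def
  proof (rule colour_class_double_count[OF finite_B adj_sym I_blocks])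
    fix x assume "x \<in> I"
    then show "card {y \<in> N x. c y = i} = 1"
      using rainbow_colour_once[OF regular _ not_adj_self rainbow_I assms] I_blocks by blast
  qed
  finally show ?thesis .
qed

lemma colour_class_finite: "finite (colour_class i)"
  using finite_B unfolding colour_class_def by simp

text \<open>If card I mod k \<noteq> k - 1, every colour of a pencil block occurs on I: otherwise that colour
  class consists of the pencil block (weight k - 1) and blocks of weight k, as a colour class
  is independent and so contains no second pencil block.\<close>
lemma pencil_colour_meets_I:
  assumes "y \<in> pencil" "card I mod k \<noteq> k - 1"
  shows "\<exists>x\<in>I. c x = c y"
proof (rule ccontr)
  assume no_I: "\<not> (\<exists>x\<in>I. c x = c y)"
  have y: "y \<in> B" "p \<in> y" "y \<notin> I" using assms(1) no_I unfolding pencil_def by auto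
  let ?C = "colour_class (c y)"
  have yC: "y \<in> ?C" using y unfolding colour_class_def by simp
  have other: "weight z = k" if "z \<in> ?C - {y}" for z
  proof -
    have z: "z \<in> B" "c z = c y" "z \<noteq> y" "z \<notin> I" using that no_I unfolding colour_class_def by auto
    have "p \<notin> z"
    proof
      assume "p \<in> z"
      then have "one_BIG_adj y z" using adj_iff[OF y(1) z(1)] y z by auto
      then show False using adj_colours_differ[OF y(1) z(1)] z by simp
    qed
    then show ?thesis using z unfolding weight_def by simp
  qed
  have "card I = weight y + (\<Sum>z \<in> ?C - {y}. weight z)"
    using colour_class_weight[OF colour_bound[OF y(1)]] sum.remove[OF colour_class_finite yC, of weight]
    by simp
  also have "\<dots> = (k - 1) + k * card (?C - {y})"
    using other y unfolding weight_def by simp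
  finally have "card I mod k = (k - 1) mod k" by simp
  then show False using assms(2) k_gt_2 by simp
qed

lemma card_pencil_le_I:
  assumes "card I mod k \<noteq> k - 1"
  shows "card pencil \<le> card I"
proof -
  have "card pencil = card (c ` pencil)" using card_image[OF pencil_inj] by simp
  also have "\<dots> \<le> card (c ` I)"
  proof (rule card_mono)
    show "c ` pencil \<subseteq> c ` I" using pencil_colour_meets_I[OF _ assms] by (metis image_eqI image_subsetI)
  qed (use finite_I in simp)
  also have "\<dots> \<le> card I" using card_image_le[OF finite_I] .
  finally show ?thesis .
qed

text \<open>If card I mod k = k - 1, a colour avoiding the pencil occurs on at least k - 1 blocks of I,
  since its class consists of blocks of I (weight 1) and blocks of weight k.\<close>
lemma colour_avoiding_pencil:
  assumes "i < r + 1" "i \<notin> c ` pencil" "card I mod k = k - 1"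
  shows "k - 1 \<le> card (colour_class i \<inter> I)"
proof -
  let ?C = "colour_class i"
  have "weight z = k" if "z \<in> ?C - I" for z
    using that assms(2) unfolding colour_class_def pencil_def weight_def by auto
  then have "(\<Sum>z \<in> ?C - I. weight z) = k * card (?C - I)" by simp
  moreover have "(\<Sum>z \<in> ?C \<inter> I. weight z) = card (?C \<inter> I)" unfolding weight_def by simp
  ultimately have "card I = card (?C \<inter> I) + k * card (?C - I)"
    using colour_class_weight[OF assms(1)] sum.Int_Diff[OF colour_class_finite] by metis
  then have "card (?C \<inter> I) mod k = k - 1" using assms(3) by (metis mod_mult_self2)
  then show ?thesis by (metis mod_less_eq_dividend)
qed

text \<open>The closed neighbourhood of a block x contains the 2n - 1 blocks through two of its points,
  so there are at least 2n - 1 colours.\<close>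
lemma two_pencils_in_nbhd:
  assumes "x \<in> B"
  shows "2 * card pencil - 1 \<le> r + 1"
proof -
  have "\<not> card x \<le> 1" using card_block[OF assms] k_gt_2 by simp
  then obtain q1 q2 where q: "q1 \<in> x" "q2 \<in> x" "q1 \<noteq> q2"
    using card_le_Suc0_iff_eq[OF finite_block[OF assms]] by auto
  have card_star: "card {b \<in> B. q \<in> b} = card pencil" if "q \<in> x" for q
  proof -
    have "card {b \<in> B. q \<in> b} * (k - 1) = card pencil * (k - 1)"
      using replication_number card_pencil block_subset[OF assms] that by auto
    then show ?thesis using k_gt_2 by simp
  qed
  let ?B1 = "{b \<in> B. q1 \<in> b}" and ?B2 = "{b \<in> B. q2 \<in> b}"
  have "?B1 \<inter> ?B2 = {x}" using block_unique[OF _ assms _ _ q] assms q by blast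
  then have "card (?B1 \<union> ?B2) = 2 * card pencil - 1"
    using card_Un_Int[of ?B1 ?B2] finite_B card_star q by simp
  moreover have "?B1 \<union> ?B2 \<subseteq> N x"
    using adj_iff[OF assms] q unfolding closed_nbhd_def nbhd_def by auto
  then have "card (?B1 \<union> ?B2) \<le> r + 1"
    using card_mono closed_nbhd_card[OF regular assms not_adj_self] by metis
  ultimately show ?thesis by simp
qed

text \<open>So at least n - 1 colours avoid the pencil, and their disjoint classes give
  (n - 1)(k - 1) blocks of I.\<close>
lemma card_I_bound:
  assumes "card I mod k = k - 1"
  shows "(card pencil - 1) * (k - 1) \<le> card I"
proof -
  let ?T = "{..<r + 1} - c ` pencil"
  obtain x where "x \<in> I" using card_I_ge_2 by fastforce
  then have "2 * card pencil - 1 \<le> r + 1" using two_pencils_in_nbhd I_blocks by blast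
  moreover have "card (c ` pencil) \<le> card pencil" by (rule card_image_le[OF finite_pencil])
  moreover have "r + 1 - card (c ` pencil) \<le> card ?T"
    using diff_card_le_card_Diff[of "c ` pencil" "{..<r + 1}"] finite_pencil by simp
  ultimately have T: "card pencil - 1 \<le> card ?T" by linarith
  have "card ?T * (k - 1) \<le> (\<Sum>i \<in> ?T. card (colour_class i \<inter> I))"
    using colour_avoiding_pencil[OF _ _ assms] sum_bounded_below[of ?T "k - 1"] by simp
  also have "\<dots> = card (\<Union>i \<in> ?T. colour_class i \<inter> I)"
    using finite_I unfolding colour_class_def by (intro card_UN_disjoint[symmetric]) auto
  also have "\<dots> \<le> card I" using finite_I by (intro card_mono) auto
  finally show ?thesis using T mult_le_mono1 order_trans by blast
qed

theorem no_rainbow_near_parallel_class: False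
proof (cases "card I mod k = k - 1")
  case True
  have "card pencil * (k - 1) = card I * k" using card_pencil card_I by simp
  then show False
    using colour_count_impossible card_I_bound[OF True] card_I_ge_2 k_gt_2 by blast
next
  case False
  then show False using card_pencil_le_I card_I_less_pencil by simp
qed

end

theorem theorem5:
  fixes V :: "'a set" and B :: "'a set set" and k v :: nat
  assumes "steiner_2_design k v V B"
    and "\<exists>P. near_parallel_class V B P"
  shows "\<not> silver B one_BIG_adj"
proof
  assume "silver B one_BIG_adj"
  then obtain r c I where regular: "regular_graph B one_BIG_adj r"
    and colouring: "silver_coloring B one_BIG_adj r c I"
    unfolding silver_def by blast
  interpret steiner_design k v V B by unfold_locales (rule assms(1))
  have alpha: "alpha_set B one_BIG_adj I" using colouring unfolding silver_coloring_def by simp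
  then have I: "I \<subseteq> B" "pairwise disjnt I"
    using independent_iff_disjoint unfolding alpha_set_def by auto
  obtain P where "near_parallel_class V B P" using assms(2) by blast
  then obtain p where "p \<in> V" "\<Union>I = V - {p}" using alpha_set_near_parallel alpha by blast
  then interpret rainbow_near_parallel_class k v V B r c I p
    using regular colouring I by unfold_locales (auto simp: silver_coloring_def)
  show False by (rule no_rainbow_near_parallel_class)
qed

end
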